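(* Let $\mathbf{A}\in\{0,1\}^{N\times N}$ be the adjacency matrix of a connected simple undirected graph on $N$ nodes whose real sign rank is $3$. For real numbers $k_1,k_1',\dots,k_N,k_N'$ and $x$, let $\mathbf{Z}\in\mathbb{R}^{N\times 3}$ have $i$-th row $(\cos(k_ix)\sin(k_i'x),\ \cos(k_ix)\cos(k_i'x),\ \sin(k_ix))$ and let $\tilde{\mathbf{A}}=\mathbf{Z}\mathbf{Z}^\top$. Then there exist $k_i,k_i'\in\mathbb{R}$ ($i=1,\dots,N$) such that $\operatorname{sign}(A_{ij})=\operatorname{sign}(\tilde A_{ij})$ for all $i\neq j$ (for any fixed nonzero $x$).
   Context: $\operatorname{sign}:\mathbb{R}\to\{+,-\}$ takes the value $-$ on $(-\infty,0]$ and $+$ on $(0,\infty)$, applied entrywise. Graphs have no self-loops and diagonal entries of adjacency matrices are ignored throughout. The real sign rank of a graph with adjacency $\mathbf{A}$ is the minimal $f$ such that there exists $\mathbf{Z}\in\mathbb{R}^{N\times f}$ with $\operatorname{sign}(A_{ij})=\operatorname{sign}((\mathbf{Z}\mathbf{Z}^\top)_{ij})$ for all $i\neq j$. *)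

theory Defs
  imports Complex_Main
begin

text \<open>Vertices of the graph are 0, ..., N-1. Matrices are functions nat => nat => real,
  only the entries with indices below N are relevant.\<close>

datatype sgn_val = Plus | Minus

definition sign :: "real \<Rightarrow> sgn_val" where
  "sign t = (if t > 0 then Plus else Minus)"

definition simple_graph_adj :: "nat \<Rightarrow> (nat \<Rightarrow> nat \<Rightarrow> real) \<Rightarrow> bool" where
  "simple_graph_adj N A \<longleftrightarrow>
     (\<forall>i<N. \<forall>j<N. A i j \<in> {0, 1}) \<and>
     (\<forall>i<N. \<forall>j<N. A i j = A j i) \<and>
     (\<forall>i<N. A i i = 0)"

definition connected_adj :: "nat \<Rightarrow> (nat \<Rightarrow> nat \<Rightarrow> real) \<Rightarrow> bool" where
  "connected_adj N A \<longleftrightarrow>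
     (\<forall>i<N. \<forall>j<N. (\<lambda>u v. u < N \<and> v < N \<and> A u v = 1)\<^sup>*\<^sup>* i j)"

definition sign_realizes :: "nat \<Rightarrow> (nat \<Rightarrow> nat \<Rightarrow> real) \<Rightarrow> nat \<Rightarrow> (nat \<Rightarrow> nat \<Rightarrow> real) \<Rightarrow> bool" where
  "sign_realizes N A f Z \<longleftrightarrow>
     (\<forall>i<N. \<forall>j<N. i \<noteq> j \<longrightarrow> sign (A i j) = sign (\<Sum>l<f. Z i l * Z j l))"

definition real_sign_rank :: "nat \<Rightarrow> (nat \<Rightarrow> nat \<Rightarrow> real) \<Rightarrow> nat" where
  "real_sign_rank N A = (LEAST f. \<exists>Z. sign_realizes N A f Z)"

definition Zpar :: "(nat \<Rightarrow> real) \<Rightarrow> (nat \<Rightarrow> real) \<Rightarrow> real \<Rightarrow> nat \<Rightarrow> nat \<Rightarrow> real" where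
  "Zpar k k' x i l =
     (if l = 0 then cos (k i * x) * sin (k' i * x)
      else if l = 1 then cos (k i * x) * cos (k' i * x)
      else if l = 2 then sin (k i * x) else 0)"

definition Atilde :: "(nat \<Rightarrow> real) \<Rightarrow> (nat \<Rightarrow> real) \<Rightarrow> real \<Rightarrow> nat \<Rightarrow> nat \<Rightarrow> real" where
  "Atilde k k' x i j = (\<Sum>l<3. Zpar k k' x i l * Zpar k k' x j l)"

end

theory Submission imports Defs begin

text \<open>Every symmetric sign pattern is realized in dimension N * N, so the sign rank is attained
  by some realization Z with three columns. Scaling rows by positive factors preserves a
  realization, and no row of Z vanishes: in a connected graph on at least two vertices each vertex
  has a neighbour, and their Gram entry is positive. So the rows may be taken on the unit sphere,
  whose points are exactly the vectors (cos a sin b, cos a cos b, sin a); as x is nonzero, the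
  angles a = k x and b = k' x can be prescribed freely.\<close>

lemma sum_lessThan_3:
  fixes g :: "nat \<Rightarrow> real"
  shows "(\<Sum>l<3. g l) = g 0 + g 1 + g 2"
  by (simp add: numeral_3_eq_3 numeral_2_eq_2 lessThan_Suc)

lemma sign_mult_pos: "c > 0 \<Longrightarrow> sign (c * t) = sign t"
  by (simp add: sign_def zero_less_mult_iff)

lemma unit_sphere_angles:
  fixes p q s :: real
  assumes unit: "p\<^sup>2 + q\<^sup>2 + s\<^sup>2 = 1"
  obtains a b where "cos a * sin b = p" "cos a * cos b = q" "sin a = s"
proof -
  have "s\<^sup>2 \<le> 1"
    using unit zero_le_power2[of p] zero_le_power2[of q] by linarith
  then have "\<bar>s\<bar> \<le> 1"
    using abs_le_square_iff[of s 1] by simp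
  then have sin_a: "sin (arcsin s) = s" and cos_a: "cos (arcsin s) = sqrt (p\<^sup>2 + q\<^sup>2)"
    using cos_arcsin[of s] unit by (auto simp: algebra_simps)
  show ?thesis
  proof (cases "p\<^sup>2 + q\<^sup>2 = 0")
    case True
    then have "p = 0" "q = 0" by (auto simp: sum_power2_eq_zero_iff)
    with that[of "arcsin s" 0] show ?thesis using sin_a cos_a True by simp
  next
    case False
    define c where "c = sqrt (p\<^sup>2 + q\<^sup>2)"
    have pq_pos: "p\<^sup>2 + q\<^sup>2 > 0"
      using False zero_le_power2[of p] zero_le_power2[of q] by linarith
    then have c_pos: "c > 0" unfolding c_def by (rule real_sqrt_gt_zero)
    have "(q / c)\<^sup>2 + (p / c)\<^sup>2 = 1"
      using pq_pos
      by (simp add: c_def power_divide add_divide_distrib[symmetric] sum_power2_gt_zero_iff)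
    then obtain b where "q / c = cos b" "p / c = sin b" by (rule sincos_total_2pi)
    then have "c * sin b = p" "c * cos b = q" using c_pos by (auto simp: field_simps)
    with that[of "arcsin s" b] show ?thesis using sin_a cos_a by (simp add: c_def)
  qed
qed

lemma sign_realizes_exists:
  assumes sym: "\<forall>i<N. \<forall>j<N. A i j = A j i"
  shows "\<exists>f Z. sign_realizes N A f Z"
proof -
  \<comment> \<open>Column a * N + b (for a < b) carries the entries of rows a and b only, and their
    product has the sign of A a b.\<close>
  define Z where "Z i l = (let a = l div N; b = l mod N in
     if a < b \<and> i = a then 1
     else if a < b \<and> i = b then (if A a b > 0 then 1 else -1)
     else 0::real)"
    for i l
  have "sign (A i j) = sign (\<Sum>l<N * N. Z i l * Z j l)"
    if ij: "i < N" "j < N" "i \<noteq> j" for i j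
  proof -
    define a where "a = min i j"
    define b where "b = max i j"
    define l\<^sub>0 where "l\<^sub>0 = a * N + b"
    have ab: "a < b" "b < N" using ij by (auto simp: a_def b_def)
    have l\<^sub>0_div_mod: "l\<^sub>0 div N = a" "l\<^sub>0 mod N = b" using ab by (auto simp: l\<^sub>0_def)
    have "l\<^sub>0 < (a + 1) * N" using ab by (simp add: l\<^sub>0_def)
    also have "\<dots> \<le> N * N" using ab by (intro mult_le_mono1) simp
    finally have l\<^sub>0_less: "l\<^sub>0 < N * N" .
    have others_vanish: "Z i l * Z j l = 0" if "l \<noteq> l\<^sub>0" for l
    proof (rule ccontr)
      assume nz: "Z i l * Z j l \<noteq> 0"
      then have "l div N < l mod N" "{l div N, l mod N} = {i, j}"
        using ij by (auto simp: Z_def Let_def split: if_splits)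
      then have "l div N = a" "l mod N = b"
        unfolding a_def b_def by (auto simp: doubleton_eq_iff)
      then have "l = l\<^sub>0" unfolding l\<^sub>0_def by (metis div_mult_mod_eq add.commute mult.commute)
      with that show False ..
    qed
    have "(\<Sum>l\<in>{..<N * N} - {l\<^sub>0}. Z i l * Z j l) = 0"
      using others_vanish by (intro sum.neutral) blast
    then have "(\<Sum>l<N * N. Z i l * Z j l) = Z i l\<^sub>0 * Z j l\<^sub>0"
      using l\<^sub>0_less by (subst sum.remove[of _ l\<^sub>0]) auto
    also have "\<dots> = (if A i j > 0 then 1 else -1)"
      using ij sym l\<^sub>0_div_mod ab unfolding Z_def a_def b_def
      by (auto simp: Let_def min_def max_def)
    finally show ?thesis by (simp add: sign_def)
  qed
  then show ?thesis unfolding sign_realizes_def by blast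
qed

lemma sign_realizes_real_sign_rank:
  assumes "\<forall>i<N. \<forall>j<N. A i j = A j i"
  obtains Z where "sign_realizes N A (real_sign_rank N A) Z"
  using LeastI_ex[OF sign_realizes_exists[OF assms]] that
  unfolding real_sign_rank_def by blast

lemma connected_adj_neighbour:
  assumes "connected_adj N A" "i < N" "j < N" "i \<noteq> j"
  obtains u where "u < N" "A i u = 1"
proof -
  have "(\<lambda>u v. u < N \<and> v < N \<and> A u v = 1)\<^sup>*\<^sup>* i j"
    using assms unfolding connected_adj_def by blast
  then show ?thesis using \<open>i \<noteq> j\<close> that by (cases rule: converse_rtranclpE) auto
qed

lemma sign_realizes_row_nonzero:
  assumes "sign_realizes N A f Z" "simple_graph_adj N A" "connected_adj N A"
    and "i < N" "2 \<le> N"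
  shows "\<exists>l<f. Z i l \<noteq> 0"
proof -
  obtain j where "j < N" "j \<noteq> i"
    using assms(5) that[of "if i = 0 then 1 else 0"] by auto
  then obtain u where u: "u < N" "A i u = 1"
    using connected_adj_neighbour[OF assms(3,4)] by metis
  moreover have "u \<noteq> i" using u assms(2,4) unfolding simple_graph_adj_def by auto
  ultimately have "sign (A i u) = sign (\<Sum>l<f. Z i l * Z u l)"
    using assms(1,4) unfolding sign_realizes_def by blast
  with u(2) have "(\<Sum>l<f. Z i l * Z u l) \<noteq> 0" by (simp add: sign_def split: if_splits)
  then show ?thesis using sum.neutral[of "{..<f}" "\<lambda>l. Z i l * Z u l"] by auto
qed

lemma sign_realizes_scale_rows:
  assumes "sign_realizes N A f Z" "\<forall>i<N. c i > 0"
  shows "sign_realizes N A f (\<lambda>i l. c i * Z i l)"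
proof -
  have "(\<Sum>l<f. c i * Z i l * (c j * Z j l)) = (c i * c j) * (\<Sum>l<f. Z i l * Z j l)" for i j
    by (simp add: sum_distrib_left algebra_simps)
  then show ?thesis
    using assms unfolding sign_realizes_def by (simp add: sign_mult_pos)
qed

lemma sign_realizes_normalize_rows:
  assumes Z: "sign_realizes N A f Z" and rows: "\<forall>i<N. \<exists>l<f. Z i l \<noteq> 0"
  obtains W where "sign_realizes N A f W" "\<forall>i<N. (\<Sum>l<f. (W i l)\<^sup>2) = 1"
proof -
  define S where "S i = (\<Sum>l<f. (Z i l)\<^sup>2)" for i
  have S_pos: "S i > 0" if i: "i < N" for i
  proof -
    obtain l where "l < f" "Z i l \<noteq> 0" using rows i by blast
    then show ?thesis unfolding S_def by (intro sum_pos2[of _ l]) auto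
  qed
  define W where "W = (\<lambda>i l. Z i l / sqrt (S i))"
  have "sign_realizes N A f W"
    using sign_realizes_scale_rows[OF Z, of "\<lambda>i. 1 / sqrt (S i)"] S_pos by (simp add: W_def)
  moreover have "(\<Sum>l<f. (W i l)\<^sup>2) = 1" if "i < N" for i
  proof -
    have "(\<Sum>l<f. (W i l)\<^sup>2) = S i / (sqrt (S i))\<^sup>2"
      by (simp add: W_def S_def power_divide sum_divide_distrib)
    also have "\<dots> = 1" using S_pos[OF that] by simp
    finally show ?thesis .
  qed
  ultimately show ?thesis using that by blast
qed

lemma Zpar_onto_unit_rows:
  assumes "x \<noteq> 0" and unit: "\<forall>i<N. (\<Sum>l<3. (W i l)\<^sup>2) = 1"
  obtains k k' where "\<forall>i<N. \<forall>l<3. Zpar k k' x i l = W i l"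
proof -
  have "\<forall>i. \<exists>a b. i < N \<longrightarrow>
      cos a * sin b = W i 0 \<and> cos a * cos b = W i 1 \<and> sin a = W i 2"
    using unit unit_sphere_angles by (metis sum_lessThan_3)
  then obtain a b where ab: "\<And>i. i < N \<Longrightarrow>
      cos (a i) * sin (b i) = W i 0 \<and> cos (a i) * cos (b i) = W i 1 \<and> sin (a i) = W i 2"
    by metis
  define k where "k i = a i / x" for i
  define k' where "k' i = b i / x" for i
  have "Zpar k k' x i l = W i l" if "i < N" "l < 3" for i l
    using ab[OF that(1)] that(2) \<open>x \<noteq> 0\<close>
    by (auto simp: Zpar_def k_def k'_def less_Suc_eq numeral_3_eq_3)
  then show ?thesis using that by blast
qed

theorem proposition2:
  fixes N :: nat and A :: "nat \<Rightarrow> nat \<Rightarrow> real" and x :: real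
  assumes "simple_graph_adj N A"
    and "connected_adj N A"
    and "real_sign_rank N A = 3"
    and "x \<noteq> 0"
  shows "\<exists>k k' :: nat \<Rightarrow> real. \<forall>i<N. \<forall>j<N. i \<noteq> j \<longrightarrow>
           sign (A i j) = sign (Atilde k k' x i j)"
proof (cases "N \<le> 1")
  case True
  then show ?thesis by auto
next
  case False
  obtain Z where Z: "sign_realizes N A 3 Z"
    using sign_realizes_real_sign_rank assms(1,3) unfolding simple_graph_adj_def by metis
  have "\<forall>i<N. \<exists>l<3. Z i l \<noteq> 0"
    using sign_realizes_row_nonzero[OF Z assms(1,2)] False by simp
  then obtain W where W: "sign_realizes N A 3 W" "\<forall>i<N. (\<Sum>l<3. (W i l)\<^sup>2) = 1"
    using sign_realizes_normalize_rows[OF Z] by blast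
  obtain k k' where Zpar_W: "\<forall>i<N. \<forall>l<3. Zpar k k' x i l = W i l"
    using Zpar_onto_unit_rows[OF assms(4) W(2)] by blast
  have "Atilde k k' x i j = (\<Sum>l<3. W i l * W j l)" if "i < N" "j < N" for i j
    unfolding Atilde_def using Zpar_W that by (intro sum.cong) auto
  then show ?thesis
    using W(1) unfolding sign_realizes_def by (intro exI[of _ k] exI[of _ k']) auto
qed

end
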